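(* Let $f_k:\mathbb{R}^n\to\mathbb{R}$ be convex, continuously differentiable, $L_k$-smooth and bounded below, $k=1,\dots,N$, and let $L_{\max}=\max_kL_k$. Set $\tau=\frac{2}{\mu_{\min}+L_{\max}}$ if every $f_k$ is additionally $\mu_k$-strongly convex (with $\mu_{\min}=\min_k\mu_k$), and $\tau=\frac1{L_{\max}}$ otherwise. Let $G_\theta$ be any of the parametrisations (P1)–(P4) and $\tilde\theta$ a parameter with $G_{\tilde\theta}=\tau I$. Given initial points $x_k^0$, define iterates $x_k^{t+1}=x_k^t-G_{\theta_t}\nabla f_k(x_k^t)$, where at each $t$ the parameter $\theta_t$ satisfies $g_t(\theta_t)\le g_t(\tilde\theta)$, with $g_t(\theta)=\frac1N\sum_{k=1}^N f_k(x_k^t-G_\theta\nabla f_k(x_k^t))$. Then $\nabla f_k(x_k^t)\to0$ as $t\to\infty$ for every $k\in\{1,\dots,N\}$.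
   Context: Parametrisations: (P1) $G_\alpha=\alpha I$; (P2) $G_p=\operatorname{diag}(p)$; (P3) $G_P=P\in\mathbb{R}^{n\times n}$; (P4) $G_\kappa x=\kappa\ast x$ (2D zero-padded convolution of an image $x\in\mathbb{R}^{m_1\times m_2}$, $n=m_1m_2$, with a kernel $\kappa$). A function is $L$-smooth if its gradient is $L$-Lipschitz; $\mu$-strongly convex if $f-\frac\mu2\|\cdot\|_2^2$ is convex. *)

theory Defs
  imports "HOL-Analysis.Analysis"
begin

definition strongly_convex :: "real \<Rightarrow> ('a::real_inner \<Rightarrow> real) \<Rightarrow> bool" where
  "strongly_convex mu f \<longleftrightarrow> convex_on UNIV (\<lambda>x. f x - mu / 2 * (norm x)^2)"

definition P1 :: "real \<Rightarrow> real^'n \<Rightarrow> real^'n" where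
  "P1 alpha x = alpha *\<^sub>R x"

definition P2 :: "real^'n \<Rightarrow> real^'n \<Rightarrow> real^'n" where
  "P2 p x = (\<chi> i. p $ i * x $ i)"

definition P3 :: "real^'n^'n \<Rightarrow> real^'n \<Rightarrow> real^'n" where
  "P3 P x = P *v x"

definition pos :: "'a::{finite,linorder} \<Rightarrow> int" where
  "pos i = int (card {j. j < i})"

text \<open>(P4) G_kappa x = kappa * x: 2D zero-padded ("same") convolution of an image
  x in R^(m1 x m2) (pixels indexed by 'm1 x 'm2) with a kernel kappa, given by its
  values at integer offsets; entries outside the image are treated as zero.\<close>
definition P4 :: "(int \<times> int \<Rightarrow> real) \<Rightarrow> real^('m1::{finite,linorder} \<times> 'm2::{finite,linorder})
                    \<Rightarrow> real^('m1 \<times> 'm2)" where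
  "P4 kappa x = (\<chi> ij. \<Sum>kl\<in>UNIV. kappa (pos (fst ij) - pos (fst kl), pos (snd ij) - pos (snd kl)) * x $ kl)"

definition thm13_claim :: "('p \<Rightarrow> real^'n \<Rightarrow> real^'n) \<Rightarrow> bool" where
  "thm13_claim G \<longleftrightarrow>
    (\<forall>(N::nat) (f::nat \<Rightarrow> real^'n \<Rightarrow> real) (grad::nat \<Rightarrow> real^'n \<Rightarrow> real^'n)
       (L::nat \<Rightarrow> real) (mu::nat \<Rightarrow> real) (tau::real) (theta_tilde::'p)
       (x::nat \<Rightarrow> nat \<Rightarrow> real^'n) (theta::nat \<Rightarrow> 'p).
      let Lmax = Max (L ` {1..N});
          g = (\<lambda>t th. (1 / real N) * (\<Sum>k=1..N. f k (x k t - G th (grad k (x k t)))))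
      in
      N \<ge> 1 \<longrightarrow>
      (\<forall>k\<in>{1..N}. convex_on UNIV (f k)) \<longrightarrow>
      (\<forall>k\<in>{1..N}. \<forall>y. (f k has_derivative (\<lambda>h. grad k y \<bullet> h)) (at y)) \<longrightarrow>
      (\<forall>k\<in>{1..N}. continuous_on UNIV (grad k)) \<longrightarrow>
      (\<forall>k\<in>{1..N}. 0 < L k \<and> (\<forall>y z. norm (grad k y - grad k z) \<le> L k * norm (y - z))) \<longrightarrow>
      (\<forall>k\<in>{1..N}. bdd_below (range (f k))) \<longrightarrow>
      (tau = 1 / Lmax \<or>
        ((\<forall>k\<in>{1..N}. 0 < mu k \<and> strongly_convex (mu k) (f k)) \<and>
         tau = 2 / (Min (mu ` {1..N}) + Lmax))) \<longrightarrow>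
      G theta_tilde = (\<lambda>v. tau *\<^sub>R v) \<longrightarrow>
      (\<forall>k\<in>{1..N}. \<forall>t. x k (Suc t) = x k t - G (theta t) (grad k (x k t))) \<longrightarrow>
      (\<forall>t. g t (theta t) \<le> g t theta_tilde) \<longrightarrow>
      (\<forall>k\<in>{1..N}. (\<lambda>t. grad k (x k t)) \<longlonglongrightarrow> 0))"

end

theory Submission imports Defs begin

text \<open>Whatever parameter \<open>\<theta>\<^sub>t\<close> is chosen, the averaged objective after the step is at most what
  the plain gradient step \<open>x - \<tau> \<nabla>f(x)\<close> achieves, and by the descent lemma that step lowers
  each \<open>f\<^sub>k\<close> by \<open>\<tau>(1 - L\<^sub>k\<tau>/2) \<parallel>\<nabla>f\<^sub>k(x)\<parallel>\<^sup>2\<close> with \<open>L\<^sub>k\<tau> < 2\<close>. Hence \<open>\<Sum>\<^sub>k f\<^sub>k(x\<^sub>k\<^sup>t)\<close> decreases by a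
  positive multiple of the squared gradient norms; being bounded below, the decreases are summable,
  so the gradients tend to zero.\<close>

lemma descent_lemma:
  fixes f :: "'a::real_inner \<Rightarrow> real"
  assumes der: "\<And>y. (f has_derivative (\<lambda>h. grad y \<bullet> h)) (at y)"
    and lip: "\<And>y z. norm (grad y - grad z) \<le> L * norm (y - z)"
  shows "f (x + d) \<le> f x + grad x \<bullet> d + L / 2 * (norm d)\<^sup>2"
proof -
  define \<psi> where "\<psi> s = f (x + s *\<^sub>R d) - s * (grad x \<bullet> d) - L / 2 * s\<^sup>2 * (norm d)\<^sup>2" for s
  have "\<psi> 1 \<le> \<psi> 0"
  proof (rule DERIV_nonpos_imp_nonincreasing[of 0 1])
    fix s :: real assume s: "0 \<le> s" "s \<le> 1"
    have "((\<lambda>s. x + s *\<^sub>R d) has_derivative (\<lambda>h. h *\<^sub>R d)) (at s)"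
      by (auto intro!: derivative_eq_intros)
    from has_derivative_compose[OF this der]
    have "((\<lambda>s. f (x + s *\<^sub>R d)) has_derivative (\<lambda>h. h * (grad (x + s *\<^sub>R d) \<bullet> d))) (at s)"
      by simp
    then have f_line: "((\<lambda>s. f (x + s *\<^sub>R d)) has_real_derivative grad (x + s *\<^sub>R d) \<bullet> d) (at s)"
      by (simp add: has_field_derivative_def mult_commute_abs)
    have D: "(\<psi> has_real_derivative
        grad (x + s *\<^sub>R d) \<bullet> d - grad x \<bullet> d - L / 2 * (2 * s) * (norm d)\<^sup>2) (at s)"
      unfolding \<psi>_def by (rule derivative_eq_intros f_line | simp)+
    have "(grad (x + s *\<^sub>R d) - grad x) \<bullet> d \<le> norm (grad (x + s *\<^sub>R d) - grad x) * norm d"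
      by (rule norm_cauchy_schwarz)
    also have "\<dots> \<le> L * norm (s *\<^sub>R d) * norm d"
      using lip[of "x + s *\<^sub>R d" x] by (simp add: mult_right_mono)
    also have "\<dots> = L * s * (norm d)\<^sup>2"
      using s by (simp add: power2_eq_square)
    finally have "grad (x + s *\<^sub>R d) \<bullet> d - grad x \<bullet> d - L / 2 * (2 * s) * (norm d)\<^sup>2 \<le> 0"
      by (simp add: inner_diff_left)
    with D show "\<exists>y. (\<psi> has_real_derivative y) (at s) \<and> y \<le> 0" by blast
  qed simp
  then show ?thesis by (simp add: \<psi>_def)
qed

lemma gradient_step_decrease:
  fixes f :: "'a::real_inner \<Rightarrow> real"
  assumes "\<And>y. (f has_derivative (\<lambda>h. grad y \<bullet> h)) (at y)"
    and "\<And>y z. norm (grad y - grad z) \<le> L * norm (y - z)"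
  shows "f (x - tau *\<^sub>R grad x) \<le> f x - tau * (1 - L * tau / 2) * (norm (grad x))\<^sup>2"
proof -
  have "f (x + - tau *\<^sub>R grad x)
      \<le> f x + grad x \<bullet> (- tau *\<^sub>R grad x) + L / 2 * (norm (- tau *\<^sub>R grad x))\<^sup>2"
    using assms by (rule descent_lemma)
  also have "\<dots> = f x - tau * (1 - L * tau / 2) * (norm (grad x))\<^sup>2"
    by (simp add: power2_norm_eq_inner[symmetric] power_mult_distrib algebra_simps power2_eq_square)
  finally show ?thesis by simp
qed

lemma step_size_admissible:
  fixes L mu :: "'i \<Rightarrow> real"
  assumes K: "finite K" "K \<noteq> {}"
    and L_pos: "\<forall>k\<in>K. 0 < L k"
    and tau: "tau = 1 / Max (L ` K) \<or>
      ((\<forall>k\<in>K. 0 < mu k) \<and> tau = 2 / (Min (mu ` K) + Max (L ` K)))"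
  shows "0 < tau" and "\<And>k. k \<in> K \<Longrightarrow> L k * tau < 2"
proof -
  have L_le_Max: "L k \<le> Max (L ` K)" if "k \<in> K" for k
    using K that by simp
  obtain k0 where "k0 \<in> K" using K by blast
  then have Max_pos: "0 < Max (L ` K)"
    using L_pos L_le_Max[of k0] by fastforce
  have "0 < tau \<and> (\<forall>k\<in>K. L k * tau < 2)"
  proof (cases "tau = 1 / Max (L ` K)")
    case True
    have "L k * tau \<le> 1" if "k \<in> K" for k
      using L_le_Max[OF that] Max_pos by (simp add: True)
    moreover have "0 < tau" using True Max_pos by simp
    ultimately show ?thesis by force
  next
    case False
    with tau have mu_pos: "\<forall>k\<in>K. 0 < mu k"
      and tau_eq: "tau = 2 / (Min (mu ` K) + Max (L ` K))" by auto
    have Min_pos: "0 < Min (mu ` K)" using K mu_pos by simp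
    show ?thesis
    proof (intro conjI ballI)
      show "0 < tau" using Min_pos Max_pos by (simp add: tau_eq)
      fix k assume "k \<in> K"
      then have "L k < Min (mu ` K) + Max (L ` K)"
        using L_le_Max[OF \<open>k \<in> K\<close>] Min_pos by linarith
      then show "L k * tau < 2"
        using Min_pos Max_pos by (simp add: tau_eq field_simps)
    qed
  qed
  then show "0 < tau" "\<And>k. k \<in> K \<Longrightarrow> L k * tau < 2" by auto
qed

lemma summable_decrease_of_bdd_below:
  fixes S a :: "nat \<Rightarrow> real"
  assumes decr: "\<And>t. S (Suc t) \<le> S t - a t"
    and a_nonneg: "\<And>t. 0 \<le> a t"
    and lower: "\<And>t. b \<le> S t"
  shows "summable a"
proof (rule summableI_nonneg_bounded[OF a_nonneg])
  fix n
  have "(\<Sum>t<n. a t) \<le> S 0 - S n"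
  proof (induction n)
    case (Suc n)
    then show ?case using decr[of n] by simp
  qed simp
  then show "(\<Sum>t<n. a t) \<le> S 0 - b"
    using lower[of n] by linarith
qed

lemma tendsto_zero_of_summable_scaled_norm_square:
  fixes v :: "nat \<Rightarrow> 'a::real_normed_vector"
  assumes "summable (\<lambda>t. c * (norm (v t))\<^sup>2)" and "0 < c"
  shows "v \<longlonglongrightarrow> 0"
proof -
  have "(\<lambda>t. c * (norm (v t))\<^sup>2 / c) \<longlonglongrightarrow> 0"
    using summable_LIMSEQ_zero[OF assms(1)] by (rule tendsto_divide_zero)
  then have "(\<lambda>t. (norm (v t))\<^sup>2) \<longlonglongrightarrow> 0"
    using \<open>0 < c\<close> by simp
  then have "(\<lambda>t. sqrt ((norm (v t))\<^sup>2)) \<longlonglongrightarrow> sqrt 0"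
    by (intro tendsto_intros)
  then show ?thesis by (simp add: tendsto_norm_zero_iff)
qed

lemma gradients_tendsto_zero_of_dominated_descent:
  fixes f :: "'i \<Rightarrow> 'a::real_inner \<Rightarrow> real" and x :: "'i \<Rightarrow> nat \<Rightarrow> 'a"
  assumes K: "finite K"
    and der: "\<And>k y. k \<in> K \<Longrightarrow> (f k has_derivative (\<lambda>h. grad k y \<bullet> h)) (at y)"
    and lip: "\<And>k y z. k \<in> K \<Longrightarrow> norm (grad k y - grad k z) \<le> L k * norm (y - z)"
    and tau_pos: "0 < tau" and tau_small: "\<And>k. k \<in> K \<Longrightarrow> L k * tau < 2"
    and bdd: "\<And>k. k \<in> K \<Longrightarrow> bdd_below (range (f k))"
    and dominated: "\<And>t. (\<Sum>k\<in>K. f k (x k (Suc t))) \<le> (\<Sum>k\<in>K. f k (x k t - tau *\<^sub>R grad k (x k t)))"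
    and j: "j \<in> K"
  shows "(\<lambda>t. grad j (x j t)) \<longlonglongrightarrow> 0"
proof -
  define c where "c k = tau * (1 - L k * tau / 2)" for k
  have c_pos: "0 < c k" if "k \<in> K" for k
    using tau_pos tau_small[OF that] by (simp add: c_def)
  define S where "S t = (\<Sum>k\<in>K. f k (x k t))" for t
  define a where "a t = (\<Sum>k\<in>K. c k * (norm (grad k (x k t)))\<^sup>2)" for t
  have decrease: "S (Suc t) \<le> S t - a t" for t
  proof -
    have "S (Suc t) \<le> (\<Sum>k\<in>K. f k (x k t) - c k * (norm (grad k (x k t)))\<^sup>2)"
      unfolding S_def c_def using dominated
      by (rule order_trans) (intro sum_mono gradient_step_decrease der lip)
    also have "\<dots> = S t - a t"
      by (simp add: S_def a_def sum_subtractf)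
    finally show ?thesis .
  qed
  have a_nonneg: "0 \<le> a t" for t
    unfolding a_def using c_pos by (intro sum_nonneg) (simp add: less_imp_le)
  obtain b where b: "b k \<le> f k y" if "k \<in> K" for k y
    using bdd unfolding bdd_below_def by (metis rangeI)
  have "(\<Sum>k\<in>K. b k) \<le> S t" for t
    unfolding S_def by (intro sum_mono b)
  with decrease a_nonneg have "summable a"
    by (rule summable_decrease_of_bdd_below)
  moreover have "norm (c j * (norm (grad j (x j t)))\<^sup>2) \<le> a t" for t
  proof -
    have "c j * (norm (grad j (x j t)))\<^sup>2 \<le> a t"
      unfolding a_def using K c_pos j by (intro member_le_sum) (simp_all add: less_imp_le)
    then show ?thesis using c_pos[OF j] by simp
  qed
  ultimately have "summable (\<lambda>t. c j * (norm (grad j (x j t)))\<^sup>2)"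
    by (rule summable_comparison_test')
  then show ?thesis
    using c_pos[OF j] by (rule tendsto_zero_of_summable_scaled_norm_square)
qed

lemma thm13_claim_any_parametrisation: "thm13_claim (G :: 'p \<Rightarrow> real^'n \<Rightarrow> real^'n)"
  unfolding thm13_claim_def Let_def
proof (intro allI impI ballI)
  fix N :: nat and f :: "nat \<Rightarrow> real^'n \<Rightarrow> real" and grad :: "nat \<Rightarrow> real^'n \<Rightarrow> real^'n"
    and L mu :: "nat \<Rightarrow> real" and tau :: real and th and x :: "nat \<Rightarrow> nat \<Rightarrow> real^'n"
    and theta and j :: nat
  assume N: "1 \<le> N"
    and der: "\<forall>k\<in>{1..N}. \<forall>y. (f k has_derivative (\<lambda>h. grad k y \<bullet> h)) (at y)"
    and smooth: "\<forall>k\<in>{1..N}. 0 < L k \<and> (\<forall>y z. norm (grad k y - grad k z) \<le> L k * norm (y - z))"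
    and bdd: "\<forall>k\<in>{1..N}. bdd_below (range (f k))"
    and tau: "tau = 1 / Max (L ` {1..N}) \<or>
      ((\<forall>k\<in>{1..N}. 0 < mu k \<and> strongly_convex (mu k) (f k)) \<and>
       tau = 2 / (Min (mu ` {1..N}) + Max (L ` {1..N})))"
    and G_th: "G th = (\<lambda>v. tau *\<^sub>R v)"
    and iter: "\<forall>k\<in>{1..N}. \<forall>t. x k (Suc t) = x k t - G (theta t) (grad k (x k t))"
    and better: "\<forall>t. 1 / real N * (\<Sum>k=1..N. f k (x k t - G (theta t) (grad k (x k t))))
      \<le> 1 / real N * (\<Sum>k=1..N. f k (x k t - G th (grad k (x k t))))"
    and j: "j \<in> {1..N}"
  have nonempty: "{1..N} \<noteq> {}" using N by simp
  have L_pos: "\<forall>k\<in>{1..N}. 0 < L k"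
    using smooth by blast
  have "tau = 1 / Max (L ` {1..N}) \<or>
      ((\<forall>k\<in>{1..N}. 0 < mu k) \<and> tau = 2 / (Min (mu ` {1..N}) + Max (L ` {1..N})))"
    using tau by blast
  note admissible = step_size_admissible[OF finite_atLeastAtMost nonempty L_pos this]
  have "(\<Sum>k=1..N. f k (x k (Suc t))) \<le> (\<Sum>k=1..N. f k (x k t - tau *\<^sub>R grad k (x k t)))" for t
  proof -
    have "(\<Sum>k=1..N. f k (x k (Suc t))) = (\<Sum>k=1..N. f k (x k t - G (theta t) (grad k (x k t))))"
      using iter by (intro sum.cong) auto
    with better[rule_format, of t] N show ?thesis
      by (simp add: G_th divide_le_cancel)
  qed
  with j show "(\<lambda>t. grad j (x j t)) \<longlonglongrightarrow> 0"
    using der smooth bdd admissible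
    by (intro gradients_tendsto_zero_of_dominated_descent[of "{1..N}" f grad L tau x j]) auto
qed

theorem mainTheorem13:
  shows "thm13_claim (P1 :: real \<Rightarrow> real^'n \<Rightarrow> real^'n)
       \<and> thm13_claim (P2 :: real^'n \<Rightarrow> real^'n \<Rightarrow> real^'n)
       \<and> thm13_claim (P3 :: real^'n^'n \<Rightarrow> real^'n \<Rightarrow> real^'n)
       \<and> thm13_claim (P4 :: (int \<times> int \<Rightarrow> real) \<Rightarrow> real^('m1::{finite,linorder} \<times> 'm2::{finite,linorder})
                             \<Rightarrow> real^('m1 \<times> 'm2))"
  by (simp add: thm13_claim_any_parametrisation)

end
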